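(* The linear operator $\bar P:\text{Ш}_e(A)\bar\otimes\text{Ш}_e(A)\to\text{Ш}_e(A)\bar\otimes\text{Ш}_e(A)$, $$\bar P(\mathfrak{a}\bar\otimes\mathfrak{b})=P_e(\mathfrak{a})\bar\otimes\varepsilon_e(\mathfrak{b})1_A+\mu\,\mathfrak{a}\bar\otimes\varepsilon_e(\mathfrak{b})1_A+\mathfrak{a}\bar\otimes P_e(\mathfrak{b}),$$ is an extended Rota-Baxter operator of weight $(\lambda,\kappa)$ on the commutative algebra $\text{Ш}_e(A)\bar\otimes\text{Ш}_e(A)$.
   Context: $\mathbf{k}$ is a commutative unitary ring, $\lambda,\kappa\in\mathbf{k}$, and $\mu\in\mathbf{k}$ a root of $t^2-\lambda t+\kappa$. An extended Rota-Baxter operator of weight $(\lambda,\kappa)$ on an algebra $R$ is a linear $P$ with $P(x)P(y)=P(xP(y))+P(P(x)y)+\lambda P(xy)+\kappa xy$. $A=(A,m_A,\mu_A,\Delta_A,\varepsilon_A)$ is a commutative bialgebra and $(\text{Ш}_e(A),\diamond,P_e,j_A)$ the free commutative extended Rota-Baxter algebra of weight $(\lambda,\kappa)$ on $A$: $\text{Ш}_e(A)=\bigoplus_{n\ge1}A^{\otimes n}$, $P_e(\mathfrak{a})=1_A\otimes\mathfrak{a}$, with product $\diamond$ defined recursively by $a_0\diamond b_0=a_0b_0$, $a_0\diamond(b_0\otimes\mathfrak{b}')=a_0b_0\otimes\mathfrak{b}'$, $(a_0\otimes\mathfrak{a}')\diamond b_0=a_0b_0\otimes\mathfrak{a}'$,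 and $(a_0\otimes\mathfrak{a}')\diamond(b_0\otimes\mathfrak{b}')=a_0b_0\otimes(\mathfrak{a}'\diamond(1_A\otimes\mathfrak{b}')+(1_A\otimes\mathfrak{a}')\diamond\mathfrak{b}'+\lambda\mathfrak{a}'\diamond\mathfrak{b}')+\kappa a_0b_0(\mathfrak{a}'\diamond\mathfrak{b}')$. $\varepsilon_e:\text{Ш}_e(A)\to\mathbf{k}$ is the unique extended Rota-Baxter algebra homomorphism with $\varepsilon_e\circ j_A=\varepsilon_A$ and $\varepsilon_e\circ P_e=-\mu\,\varepsilon_e$. $\bar\otimes$ denotes the tensor product between copies of $\text{Ш}_e(A)$ (to distinguish it from the tensor inside $\text{Ш}_e(A)$); $\text{Ш}_e(A)\bar\otimes\text{Ш}_e(A)$ has the componentwise product. *)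

theory Defs
  imports Complex_Main
begin

definition comm_kalg :: "('k::comm_ring_1 \<Rightarrow> 'r::comm_ring_1 \<Rightarrow> 'r) \<Rightarrow> bool" where
  "comm_kalg s \<longleftrightarrow> module s \<and> (\<forall>c x y. s c (x * y) = s c x * y)"

definition kalg_hom ::
  "('k::comm_ring_1 \<Rightarrow> 'r::comm_ring_1 \<Rightarrow> 'r) \<Rightarrow> ('k \<Rightarrow> 's::comm_ring_1 \<Rightarrow> 's) \<Rightarrow> ('r \<Rightarrow> 's) \<Rightarrow> bool" where
  "kalg_hom s1 s2 f \<longleftrightarrow> module_hom s1 s2 f \<and> (\<forall>x y. f (x * y) = f x * f y) \<and> f 1 = 1"

definition ext_RB_op ::
  "('k::comm_ring_1 \<Rightarrow> 'r::comm_ring_1 \<Rightarrow> 'r) \<Rightarrow> 'k \<Rightarrow> 'k \<Rightarrow> ('r \<Rightarrow> 'r) \<Rightarrow> bool" where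
  "ext_RB_op s lam kap P \<longleftrightarrow> module_hom s s P \<and>
     (\<forall>x y. P x * P y = P (x * P y) + P (P x * y) + s lam (P (x * y)) + s kap (x * y))"

end

(*
  Put Q = P_e + mu id.  Because mu is a root of t^2 - lam t + kap, Q is a Rota-Baxter operator
  of weight (lam - 2 mu, 0), and Pbar (a (x) b) = eps_e(b) Q(a) (x) 1 + a (x) P_e(b).  On pure
  tensors the extended Rota-Baxter identity for Pbar therefore splits into the identity for Q in
  the first factor, scaled by eps_e(b) eps_e(d) (the cross terms use eps_e(b P_e(d)) =
  -mu eps_e(b) eps_e(d)), and the identity for P_e in the second factor.  The defect of the
  identity is bilinear and symmetric, and pure tensors span, so it vanishes everywhere.
*)

theory Submission
  imports Defs
begin

definition algebra_map :: "('k::comm_ring_1 \<Rightarrow> 'r::comm_ring_1 \<Rightarrow> 'r) \<Rightarrow> 'k \<Rightarrow> 'r" where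
  "algebra_map s c = s c 1"

lemma comm_kalg_module: "comm_kalg s \<Longrightarrow> module s"
  by (simp add: comm_kalg_def)

lemma comm_kalg_scale_eq_mult: "comm_kalg s \<Longrightarrow> s c x = algebra_map s c * x"
  unfolding comm_kalg_def algebra_map_def by (metis mult_1)

lemma algebra_map_zero: "comm_kalg s \<Longrightarrow> algebra_map s 0 = 0"
  by (simp add: algebra_map_def comm_kalg_module module.scale_zero_left)

lemma algebra_map_one: "comm_kalg s \<Longrightarrow> algebra_map s 1 = 1"
  by (simp add: algebra_map_def comm_kalg_module module.scale_one)

lemma algebra_map_add: "comm_kalg s \<Longrightarrow> algebra_map s (c + d) = algebra_map s c + algebra_map s d"
  by (simp add: algebra_map_def comm_kalg_module module.scale_left_distrib)

lemma algebra_map_diff: "comm_kalg s \<Longrightarrow> algebra_map s (c - d) = algebra_map s c - algebra_map s d"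
  by (simp add: algebra_map_def comm_kalg_module module.scale_left_diff_distrib)

lemma algebra_map_minus: "comm_kalg s \<Longrightarrow> algebra_map s (- c) = - algebra_map s c"
  by (simp add: algebra_map_def comm_kalg_module module.scale_minus_left)

lemma algebra_map_mult: "comm_kalg s \<Longrightarrow> algebra_map s (c * d) = algebra_map s c * algebra_map s d"
  by (metis algebra_map_def comm_kalg_module comm_kalg_scale_eq_mult module.scale_scale)

lemma algebra_map_two: "comm_kalg s \<Longrightarrow> algebra_map s 2 = 2"
  using algebra_map_add[of s 1 1] by (simp add: algebra_map_one)

lemma module_hom_mult_left: "comm_kalg s \<Longrightarrow> module_hom s s (\<lambda>x. a * x)"
  by (simp add: module_hom_iff comm_kalg_module comm_kalg_scale_eq_mult distrib_left mult.left_commute)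

definition ext_RB_defect ::
  "('k::comm_ring_1 \<Rightarrow> 'r::comm_ring_1 \<Rightarrow> 'r) \<Rightarrow> 'k \<Rightarrow> 'k \<Rightarrow> ('r \<Rightarrow> 'r) \<Rightarrow> 'r \<Rightarrow> 'r \<Rightarrow> 'r" where
  "ext_RB_defect s lam kap P x y =
     P x * P y - (P (x * P y) + P (P x * y) + s lam (P (x * y)) + s kap (x * y))"

lemma ext_RB_op_iff_defect:
  "ext_RB_op s lam kap P \<longleftrightarrow> module_hom s s P \<and> (\<forall>x y. ext_RB_defect s lam kap P x y = 0)"
  by (simp add: ext_RB_op_def ext_RB_defect_def)

lemma ext_RB_defect_commute: "ext_RB_defect s lam kap P x y = ext_RB_defect s lam kap P y x"
  by (simp add: ext_RB_defect_def ac_simps)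

lemma module_hom_ext_RB_defect:
  assumes s: "comm_kalg s" and P: "module_hom s s P"
  shows "module_hom s s (ext_RB_defect s lam kap P x)"
proof -
  interpret module_pair s s
    using s by (simp add: module_pair_def comm_kalg_module)
  have mult: "module_hom s s (\<lambda>y. a * y)" for a
    using s by (rule module_hom_mult_left)
  have "module_hom s s (\<lambda>y. P x * P y - (P (x * P y) + P (P x * y) + s lam (P (x * y)) + s kap (x * y)))"
    by (intro module_hom_sub module_hom_add module_hom_scale
          module_hom_compose[OF P mult, unfolded o_def]
          module_hom_compose[OF _ P, unfolded o_def] module_hom_compose[OF mult P, unfolded o_def]
          mult P)
  then show ?thesis
    by (simp add: ext_RB_defect_def[abs_def])
qed

lemma ext_RB_op_on_spanning_set:
  assumes s: "comm_kalg s" and P: "module_hom s s P" and S: "module.span s S = UNIV"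
    and RB_S: "\<And>x y. x \<in> S \<Longrightarrow> y \<in> S \<Longrightarrow> ext_RB_defect s lam kap P x y = 0"
  shows "ext_RB_op s lam kap P"
proof -
  interpret module_pair s s
    using s by (simp add: module_pair_def comm_kalg_module)
  have defect_vanishes: "ext_RB_defect s lam kap P x y = 0"
    if "\<And>y. y \<in> S \<Longrightarrow> ext_RB_defect s lam kap P x y = 0" for x y
    using module_hom_eq_on_span[OF module_hom_ext_RB_defect[OF s P] module_hom_zero, where B=S and x=y]
      that S by simp
  have on_S: "ext_RB_defect s lam kap P x y = 0" if "x \<in> S" for x y
    by (rule defect_vanishes) (rule RB_S[OF that])
  have "ext_RB_defect s lam kap P x y = 0" for x y
    by (rule defect_vanishes) (subst ext_RB_defect_commute, rule on_S)
  with P show ?thesis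
    by (simp add: ext_RB_op_iff_defect)
qed

lemma ext_RB_identity_shift:
  fixes P :: "'r::comm_ring_1 \<Rightarrow> 'r"
  assumes P_add: "\<And>x y. P (x + y) = P x + P y" and P_scale: "\<And>x. P (m * x) = m * P x"
    and RB: "P x * P y = P (x * P y) + P (P x * y) + l * P (x * y) + (l * m - m * m) * (x * y)"
  shows "(P x + m * x) * (P y + m * y) =
    P (x * (P y + m * y)) + m * (x * (P y + m * y)) + (P ((P x + m * x) * y) + m * ((P x + m * x) * y))
    + (l - 2 * m) * (P (x * y) + m * (x * y))"
proof -
  have left: "P (x * (P y + m * y)) = P (x * P y) + m * P (x * y)"
    by (simp only: distrib_left P_add mult.left_commute[of x] P_scale)
  have right: "P ((P x + m * x) * y) = P (P x * y) + m * P (x * y)"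
    by (simp only: distrib_right P_add mult.assoc P_scale)
  have "(P x + m * x) * (P y + m * y) = P x * P y + m * (x * P y) + m * (P x * y) + m * m * (x * y)"
    by (simp add: algebra_simps)
  also have "\<dots> = P (x * P y) + P (P x * y) + l * P (x * y) + (l * m - m * m) * (x * y)
      + m * (x * P y) + m * (P x * y) + m * m * (x * y)"
    unfolding RB ..
  also have "\<dots> = P (x * (P y + m * y)) + m * (x * (P y + m * y))
      + (P ((P x + m * x) * y) + m * ((P x + m * x) * y)) + (l - 2 * m) * (P (x * y) + m * (x * y))"
    unfolding left right by (simp add: algebra_simps)
  finally show ?thesis .
qed

lemma ext_RB_op_shift:
  assumes s: "comm_kalg s" and P: "ext_RB_op s lam kap P" and mu: "mu ^ 2 - lam * mu + kap = 0"
  shows "ext_RB_op s (lam - 2 * mu) 0 (\<lambda>x. P x + s mu x)"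
proof -
  interpret module_pair s s
    using s by (simp add: module_pair_def comm_kalg_module)
  let ?a = "algebra_map s"
  have P_lin: "module_hom s s P"
    using P by (simp add: ext_RB_op_def)
  have kap: "?a kap = ?a lam * ?a mu - ?a mu * ?a mu"
  proof -
    have "?a (mu ^ 2 - lam * mu + kap) = 0"
      using mu by (simp add: algebra_map_def)
    then show ?thesis
      by (simp add: power2_eq_square algebra_map_add[OF s] algebra_map_diff[OF s]
          algebra_map_mult[OF s] eq_neg_iff_add_eq_0 algebra_simps)
  qed
  have "(P x + ?a mu * x) * (P y + ?a mu * y) =
      P (x * (P y + ?a mu * y)) + ?a mu * (x * (P y + ?a mu * y))
      + (P ((P x + ?a mu * x) * y) + ?a mu * ((P x + ?a mu * x) * y))
      + (?a lam - 2 * ?a mu) * (P (x * y) + ?a mu * (x * y))" for x y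
  proof (rule ext_RB_identity_shift)
    show "P (x + y) = P x + P y" for x y
      using P_lin by (simp add: module_hom_iff)
    show "P (?a mu * x) = ?a mu * P x" for x
      using P_lin by (simp add: module_hom_iff comm_kalg_scale_eq_mult[OF s])
    show "P x * P y = P (x * P y) + P (P x * y) + ?a lam * P (x * y)
        + (?a lam * ?a mu - ?a mu * ?a mu) * (x * y)"
      using P by (simp add: ext_RB_op_def comm_kalg_scale_eq_mult[OF s] flip: kap)
  qed
  moreover have "module_hom s s (\<lambda>x. P x + s mu x)"
    using P_lin m1.module_hom_scale_self by (rule module_hom_add)
  ultimately show ?thesis
    by (simp add: ext_RB_op_def comm_kalg_scale_eq_mult[OF s] algebra_map_zero[OF s]
        algebra_map_diff[OF s] algebra_map_mult[OF s] algebra_map_two[OF s])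
qed

locale ext_RB_tensor_square =
  fixes sR :: "'k::comm_ring_1 \<Rightarrow> 'r::comm_ring_1 \<Rightarrow> 'r" and sT :: "'k \<Rightarrow> 't::comm_ring_1 \<Rightarrow> 't"
    and tp :: "'r \<Rightarrow> 'r \<Rightarrow> 't"
    and lam kap mu :: 'k and P :: "'r \<Rightarrow> 'r" and eps :: "'r \<Rightarrow> 'k" and Pbar :: "'t \<Rightarrow> 't"
  assumes R_alg: "comm_kalg sR" and T_alg: "comm_kalg sT"
    and tp_lin1: "\<And>b. module_hom sR sT (\<lambda>a. tp a b)"
    and tp_lin2: "\<And>a. module_hom sR sT (\<lambda>b. tp a b)"
    and tp_mult: "\<And>a b c d. tp a b * tp c d = tp (a * c) (b * d)"
    and mu_root: "mu ^ 2 - lam * mu + kap = 0"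
    and P_RB: "ext_RB_op sR lam kap P"
    and eps_hom: "kalg_hom sR (*) eps"
    and eps_P: "\<And>x. eps (P x) = - mu * eps x"
    and Pbar_lin: "module_hom sT sT Pbar"
    and Pbar_tp: "\<And>a b. Pbar (tp a b) =
        tp (P a) (sR (eps b) 1) + sT mu (tp a (sR (eps b) 1)) + tp a (P b)"
begin

abbreviation \<sigma> :: "'k \<Rightarrow> 't" where
  "\<sigma> \<equiv> algebra_map sT"

definition Pmu :: "'r \<Rightarrow> 'r" where
  "Pmu a = P a + sR mu a"

lemma Pmu_RB: "ext_RB_op sR (lam - 2 * mu) 0 Pmu"
  unfolding Pmu_def[abs_def] using R_alg P_RB mu_root by (rule ext_RB_op_shift)

lemma tp_add_left: "tp (a + a') b = tp a b + tp a' b"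
  using tp_lin1 by (simp add: module_hom_iff)

lemma tp_add_right: "tp a (b + b') = tp a b + tp a b'"
  using tp_lin2 by (simp add: module_hom_iff)

lemma tp_scale_left: "tp (sR c a) b = \<sigma> c * tp a b"
  using tp_lin1 by (simp add: module_hom_iff comm_kalg_scale_eq_mult[OF T_alg])

lemma tp_scale_right: "tp a (sR c b) = \<sigma> c * tp a b"
  using tp_lin2 by (simp add: module_hom_iff comm_kalg_scale_eq_mult[OF T_alg])

lemma Pbar_add: "Pbar (x + y) = Pbar x + Pbar y"
  using Pbar_lin by (simp add: module_hom_iff)

lemma Pbar_scale: "Pbar (\<sigma> c * x) = \<sigma> c * Pbar x"
  using Pbar_lin by (simp add: module_hom_iff comm_kalg_scale_eq_mult[OF T_alg])

lemma eps_mult: "eps (x * y) = eps x * eps y"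
  using eps_hom by (simp add: kalg_hom_def)

lemma Pbar_tp_Pmu: "Pbar (tp a b) = \<sigma> (eps b) * tp (Pmu a) 1 + tp a (P b)"
  by (simp add: Pbar_tp Pmu_def tp_add_left tp_scale_left tp_scale_right
      comm_kalg_scale_eq_mult[OF T_alg] algebra_simps)

lemma ext_RB_op_tp_left:
  assumes "ext_RB_op sR l k Q"
  shows "tp (Q a * Q c) v =
    tp (Q (a * Q c)) v + tp (Q (Q a * c)) v + \<sigma> l * tp (Q (a * c)) v + \<sigma> k * tp (a * c) v"
  using assms by (simp add: ext_RB_op_def tp_add_left tp_scale_left)

lemma ext_RB_op_tp_right:
  assumes "ext_RB_op sR l k Q"
  shows "tp u (Q b * Q d) =
    tp u (Q (b * Q d)) + tp u (Q (Q b * d)) + \<sigma> l * tp u (Q (b * d)) + \<sigma> k * tp u (b * d)"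
  using assms by (simp add: ext_RB_op_def tp_add_right tp_scale_right)

lemma eps_mult_P: "eps (b * P d) = - mu * eps b * eps d"
  by (simp add: eps_mult eps_P)

lemma eps_P_mult: "eps (P b * d) = - mu * eps b * eps d"
  by (simp add: eps_mult eps_P)

lemma Pbar_tp_mult_Pbar_tp:
  "Pbar (tp a b) * Pbar (tp c d) =
    \<sigma> (eps b) * \<sigma> (eps d) * tp (Pmu a * Pmu c) 1 + \<sigma> (eps b) * tp (Pmu a * c) (P d)
    + \<sigma> (eps d) * tp (a * Pmu c) (P b) + tp (a * c) (P b * P d)"
  by (simp add: Pbar_tp_Pmu tp_mult algebra_simps)

lemma Pbar_tp_mult_Pbar:
  "Pbar (tp a b * Pbar (tp c d)) =
    \<sigma> (eps d) * (\<sigma> (eps b) * tp (Pmu (a * Pmu c)) 1 + tp (a * Pmu c) (P b))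
    + \<sigma> (eps (b * P d)) * tp (Pmu (a * c)) 1 + tp (a * c) (P (b * P d))"
proof -
  have "tp a b * Pbar (tp c d) = \<sigma> (eps d) * tp (a * Pmu c) b + tp (a * c) (b * P d)"
    by (simp add: Pbar_tp_Pmu distrib_left mult.left_commute[of "tp a b"] tp_mult)
  then show ?thesis
    by (simp add: Pbar_add Pbar_scale Pbar_tp_Pmu)
qed

lemma Pbar_Pbar_mult_tp:
  "Pbar (Pbar (tp a b) * tp c d) =
    \<sigma> (eps b) * (\<sigma> (eps d) * tp (Pmu (Pmu a * c)) 1 + tp (Pmu a * c) (P d))
    + \<sigma> (eps (P b * d)) * tp (Pmu (a * c)) 1 + tp (a * c) (P (P b * d))"
proof -
  have "Pbar (tp a b) * tp c d = \<sigma> (eps b) * tp (Pmu a * c) d + tp (a * c) (P b * d)"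
    by (simp add: Pbar_tp_Pmu distrib_right mult.assoc tp_mult)
  then show ?thesis
    by (simp add: Pbar_add Pbar_scale Pbar_tp_Pmu)
qed

lemma ext_RB_defect_tp: "ext_RB_defect sT lam kap Pbar (tp a b) (tp c d) = 0"
proof -
  have weight: "sT lam (Pbar (tp a b * tp c d)) =
      \<sigma> lam * (\<sigma> (eps b) * \<sigma> (eps d) * tp (Pmu (a * c)) 1 + tp (a * c) (P (b * d)))"
    by (simp add: comm_kalg_scale_eq_mult[OF T_alg] tp_mult Pbar_tp_Pmu eps_mult
        algebra_map_mult[OF T_alg])
  show ?thesis
    unfolding ext_RB_defect_def Pbar_tp_mult_Pbar_tp Pbar_tp_mult_Pbar Pbar_Pbar_mult_tp weight
      ext_RB_op_tp_left[OF Pmu_RB] ext_RB_op_tp_right[OF P_RB] eps_mult_P eps_P_mult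
      comm_kalg_scale_eq_mult[OF T_alg, of kap]
    by (simp add: tp_mult algebra_map_zero[OF T_alg] algebra_map_diff[OF T_alg]
        algebra_map_mult[OF T_alg] algebra_map_minus[OF T_alg] algebra_map_two[OF T_alg]
        algebra_simps)
qed

theorem ext_RB_op_Pbar:
  assumes "module.span sT (range (\<lambda>(a, b). tp a b)) = UNIV"
  shows "ext_RB_op sT lam kap Pbar"
  using T_alg Pbar_lin assms by (rule ext_RB_op_on_spanning_set) (auto simp: ext_RB_defect_tp)

end

theorem lemma4p3:
  fixes lam kap mu :: "'k::comm_ring_1"
    and sA :: "'k \<Rightarrow> 'a::comm_ring_1 \<Rightarrow> 'a" and epsA :: "'a \<Rightarrow> 'k"
    and sR :: "'k \<Rightarrow> 'r::comm_ring_1 \<Rightarrow> 'r" and Pe :: "'r \<Rightarrow> 'r"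
    and jA :: "'a \<Rightarrow> 'r" and epse :: "'r \<Rightarrow> 'k"
    and sT :: "'k \<Rightarrow> 't::comm_ring_1 \<Rightarrow> 't" and tp :: "'r \<Rightarrow> 'r \<Rightarrow> 't"
    and Pbar :: "'t \<Rightarrow> 't"
  assumes mu_root: "mu ^ 2 - lam * mu + kap = 0"
    \<comment> \<open>A: commutative k-algebra with counit an algebra map\<close>
    and A_alg: "comm_kalg sA"
    and epsA_hom: "kalg_hom sA (*) epsA"
    \<comment> \<open>Sh_e(A): commutative ext. RB algebra of weight (lam,kap) with structure map jA\<close>
    and R_alg: "comm_kalg sR"
    and Pe_RB: "ext_RB_op sR lam kap Pe"
    and jA_hom: "kalg_hom sA sR jA"
    \<comment> \<open>eps_e: ext. RB algebra hom with eps_e o jA = eps_A and eps_e o Pe = - mu eps_e\<close>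
    and epse_hom: "kalg_hom sR (*) epse"
    and epse_j: "\<And>a. epse (jA a) = epsA a"
    and epse_P: "\<And>x. epse (Pe x) = - mu * epse x"
    \<comment> \<open>T = Sh_e(A) (x) Sh_e(A): commutative k-algebra with bilinear tp, componentwise product,
        spanned by pure tensors\<close>
    and T_alg: "comm_kalg sT"
    and tp_lin1: "\<And>b. module_hom sR sT (\<lambda>a. tp a b)"
    and tp_lin2: "\<And>a. module_hom sR sT (\<lambda>b. tp a b)"
    and tp_mult: "\<And>a b c d. tp a b * tp c d = tp (a * c) (b * d)"
    and tp_one: "tp 1 1 = 1"
    and tp_span: "module.span sT (range (\<lambda>(a, b). tp a b)) = UNIV"
    \<comment> \<open>the linear operator Pbar\<close>
    and Pbar_lin: "module_hom sT sT Pbar"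
    and Pbar_tp: "\<And>a b. Pbar (tp a b) =
        tp (Pe a) (sR (epse b) 1) + sT mu (tp a (sR (epse b) 1)) + tp a (Pe b)"
  shows "ext_RB_op sT lam kap Pbar"
proof -
  interpret ext_RB_tensor_square sR sT tp lam kap mu Pe epse Pbar
    by (rule ext_RB_tensor_square.intro)
      (fact R_alg T_alg tp_lin1 tp_lin2 tp_mult mu_root Pe_RB epse_hom epse_P Pbar_lin Pbar_tp)+
  show ?thesis
    using tp_span by (rule ext_RB_op_Pbar)
qed

end
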